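(* Let $\alpha_2\in\mathbb{C}$ and let $u(t)$ satisfy the fifth-order equation $$\frac{d^5u}{dt^5}=\frac{N}{48\left(\frac{du}{dt}\right)^2+8\frac{d^3u}{dt^3}-2t},$$ where $$N=(1-\alpha_2)\alpha_2-2u'\left(24u'^2-t\right)^2-24u''\left(u'-tu''\right)+8u'''\left(5u'\left(t-24u'^2\right)-12u''^2-16u'u'''\right)+2u''''\left(48u'u''+2u''''-1\right)$$ (primes denote $d/dt$). Define $$x=u,\quad y=u',\quad z=u'',\quad w=u'''-\frac14\left(t-24u'^2\right),\quad q=\frac{u''''-\frac{\alpha_2-24u'u''}{2}}{u'''-\frac14\left(t-24u'^2\right)} .$$ Then this birational change of variables takes the equation (written as a first-order system in $u,u',u'',u''',u''''$) into the polynomial system $$\frac{dx}{dt}=y,\quad \frac{dy}{dt}=z,\quad \frac{dz}{dt}=-6y^2+w+\frac t4,\quad \frac{dw}{dt}=wq+\frac{2\alpha_2-1}{4},\quad \frac{dq}{dt}=-\frac12q^2-4y .$$ *)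

theory Defs
  imports "HOL-Analysis.Analysis"
begin

end

theory Submission
  imports Defs "HOL-Complex_Analysis.Complex_Analysis"
begin

text \<open>
  The first three equations only rename derivatives, and the equation for \<open>w\<close> is the
  definition of \<open>q\<close> solved for \<open>u''''\<close>. The content lies in the Riccati equation for
  \<open>q = A / W\<close> with \<open>A = u'''' - (\<alpha>\<^sub>2 - 24 u' u'') / 2\<close> and \<open>W = w\<close>: by the quotient rule it
  amounts to the polynomial identity \<open>A' W - A W' = -A\<^sup>2 / 2 - 4 u' W\<^sup>2\<close>, and since the
  denominator of the equation is exactly \<open>8 W\<close>, substituting the equation for the fifth
  derivative turns both sides into the same polynomial in \<open>t, u', \<dots>, u''''\<close>.
\<close>

lemma q_coordinate_riccati_identity:
  fixes t \<alpha> u1 u2 u3 u4 u5 :: "'a::field_char_0"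
  defines "W \<equiv> u3 - (t - 24 * u1^2) / 4"
    and "A \<equiv> u4 - (\<alpha> - 24 * u1 * u2) / 2"
  assumes W_nz: "W \<noteq> 0"
    and ode: "u5 = ((1 - \<alpha>) * \<alpha>
        - 2 * u1 * (24 * u1^2 - t)^2
        - 24 * u2 * (u1 - t * u2)
        + 8 * u3 * (5 * u1 * (t - 24 * u1^2) - 12 * u2^2 - 16 * u1 * u3)
        + 2 * u4 * (48 * u1 * u2 + 2 * u4 - 1))
       / (48 * u1^2 + 8 * u3 - 2 * t)"
  shows "(u5 + 12 * (u2^2 + u1 * u3)) * W - A * (u4 - 1/4 + 12 * u1 * u2)
           = - (1/2) * A^2 - 4 * u1 * W^2"
proof -
  have "48 * u1^2 + 8 * u3 - 2 * t = 8 * W"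
    by (simp add: W_def field_simps)
  with ode W_nz have "8 * W * u5 = (1 - \<alpha>) * \<alpha>
        - 2 * u1 * (24 * u1^2 - t)^2
        - 24 * u2 * (u1 - t * u2)
        + 8 * u3 * (5 * u1 * (t - 24 * u1^2) - 12 * u2^2 - 16 * u1 * u3)
        + 2 * u4 * (48 * u1 * u2 + 2 * u4 - 1)"
    by simp
  then show ?thesis
    unfolding A_def W_def by algebra
qed

lemma has_field_derivative_w_coordinate:
  fixes u1 u3 :: "'a::real_normed_field \<Rightarrow> 'a"
  assumes "(u1 has_field_derivative v2) (at t)" and "(u3 has_field_derivative v4) (at t)"
  shows "((\<lambda>s. u3 s - (s - 24 * (u1 s)^2) / 4) has_field_derivative
            v4 - 1/4 + 12 * u1 t * v2) (at t)"
  by (auto intro!: derivative_eq_intros assms simp: field_simps)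

lemma has_field_derivative_q_coordinate:
  fixes u1 u2 u3 u4 :: "'a::real_normed_field \<Rightarrow> 'a" and \<alpha> :: 'a
  defines "W \<equiv> \<lambda>s. u3 s - (s - 24 * (u1 s)^2) / 4"
    and "A \<equiv> \<lambda>s. u4 s - (\<alpha> - 24 * u1 s * u2 s) / 2"
  assumes d1: "(u1 has_field_derivative u2 t) (at t)"
    and d2: "(u2 has_field_derivative u3 t) (at t)"
    and d3: "(u3 has_field_derivative u4 t) (at t)"
    and d4: "(u4 has_field_derivative u5) (at t)"
    and W_nz: "W t \<noteq> 0"
    and ode: "u5 = ((1 - \<alpha>) * \<alpha>
        - 2 * u1 t * (24 * (u1 t)^2 - t)^2
        - 24 * u2 t * (u1 t - t * u2 t)
        + 8 * u3 t * (5 * u1 t * (t - 24 * (u1 t)^2) - 12 * (u2 t)^2 - 16 * u1 t * u3 t)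
        + 2 * u4 t * (48 * u1 t * u2 t + 2 * u4 t - 1))
       / (48 * (u1 t)^2 + 8 * u3 t - 2 * t)"
  shows "((\<lambda>s. A s / W s) has_field_derivative - (1/2) * (A t / W t)^2 - 4 * u1 t) (at t)"
proof -
  have dA: "(A has_field_derivative u5 + 12 * ((u2 t)^2 + u1 t * u3 t)) (at t)"
    unfolding A_def
    by (auto intro!: derivative_eq_intros d1 d2 d4 simp: field_simps power2_eq_square)
  have dW: "(W has_field_derivative u4 t - 1/4 + 12 * u1 t * u2 t) (at t)"
    unfolding W_def using has_field_derivative_w_coordinate[OF d1 d3] .
  have riccati: "(u5 + 12 * ((u2 t)^2 + u1 t * u3 t)) * W t - A t * (u4 t - 1/4 + 12 * u1 t * u2 t)
                   = - (1/2) * (A t)^2 - 4 * u1 t * (W t)^2"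
    using q_coordinate_riccati_identity[OF W_nz[unfolded W_def] ode] unfolding A_def W_def .
  have "((u5 + 12 * ((u2 t)^2 + u1 t * u3 t)) * W t
           - A t * (u4 t - 1/4 + 12 * u1 t * u2 t)) / (W t * W t)
        = - (1/2) * (A t / W t)^2 - 4 * u1 t"
    unfolding riccati using W_nz by (simp add: field_simps power2_eq_square)
  with DERIV_divide[OF dA dW W_nz] show ?thesis
    by simp
qed

theorem theorem9p1:
  fixes u :: "complex \<Rightarrow> complex" and \<alpha>2 :: complex and S :: "complex set"
    and x y z w q :: "complex \<Rightarrow> complex"
  assumes S_open: "open S"
    and u_holo: "u holomorphic_on S"
    and den_nz: "\<forall>t\<in>S. 48 * (deriv u t)^2 + 8 * (deriv ^^ 3) u t - 2 * t \<noteq> 0"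
    and ode: "\<forall>t\<in>S. (deriv ^^ 5) u t =
       ((1 - \<alpha>2) * \<alpha>2
        - 2 * deriv u t * (24 * (deriv u t)^2 - t)^2
        - 24 * (deriv ^^ 2) u t * (deriv u t - t * (deriv ^^ 2) u t)
        + 8 * (deriv ^^ 3) u t * (5 * deriv u t * (t - 24 * (deriv u t)^2)
              - 12 * ((deriv ^^ 2) u t)^2 - 16 * deriv u t * (deriv ^^ 3) u t)
        + 2 * (deriv ^^ 4) u t * (48 * deriv u t * (deriv ^^ 2) u t + 2 * (deriv ^^ 4) u t - 1))
       / (48 * (deriv u t)^2 + 8 * (deriv ^^ 3) u t - 2 * t)"
    and w_nz: "\<forall>t\<in>S. (deriv ^^ 3) u t - (t - 24 * (deriv u t)^2) / 4 \<noteq> 0"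
    and x_def: "x \<equiv> u"
    and y_def: "y \<equiv> deriv u"
    and z_def: "z \<equiv> (deriv ^^ 2) u"
    and w_def: "w \<equiv> (\<lambda>t. (deriv ^^ 3) u t - (t - 24 * (deriv u t)^2) / 4)"
    and q_def: "q \<equiv> (\<lambda>t. ((deriv ^^ 4) u t - (\<alpha>2 - 24 * deriv u t * (deriv ^^ 2) u t) / 2)
                       / ((deriv ^^ 3) u t - (t - 24 * (deriv u t)^2) / 4))"
  shows "\<forall>t\<in>S.
           (x has_field_derivative y t) (at t) \<and>
           (y has_field_derivative z t) (at t) \<and>
           (z has_field_derivative (- 6 * (y t)^2 + w t + t / 4)) (at t) \<and>
           (w has_field_derivative (w t * q t + (2 * \<alpha>2 - 1) / 4)) (at t) \<and>
           (q has_field_derivative (- (1/2) * (q t)^2 - 4 * y t)) (at t)"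
proof
  fix t assume t: "t \<in> S"
  have d: "((deriv ^^ n) u has_field_derivative (deriv ^^ Suc n) u t) (at t)" for n
    using has_field_derivative_higher_deriv[OF u_holo S_open t] .
  have d0: "(u has_field_derivative deriv u t) (at t)"
    using d[of 0] by simp
  have d1: "(deriv u has_field_derivative (deriv ^^ 2) u t) (at t)"
    using d[of 1] by (simp add: numeral_2_eq_2)
  have d2: "((deriv ^^ 2) u has_field_derivative (deriv ^^ 3) u t) (at t)"
    and d3: "((deriv ^^ 3) u has_field_derivative (deriv ^^ 4) u t) (at t)"
    and d4: "((deriv ^^ 4) u has_field_derivative (deriv ^^ 5) u t) (at t)"
    using d[of 2] d[of 3] d[of 4] by (simp_all del: funpow.simps)
  have z': "- 6 * (y t)^2 + w t + t / 4 = (deriv ^^ 3) u t"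
    by (simp add: y_def w_def)
  have wq: "w t * q t = (deriv ^^ 4) u t - (\<alpha>2 - 24 * deriv u t * (deriv ^^ 2) u t) / 2"
    using w_nz t by (simp add: w_def q_def)
  have w': "w t * q t + (2 * \<alpha>2 - 1) / 4
              = (deriv ^^ 4) u t - 1/4 + 12 * deriv u t * (deriv ^^ 2) u t"
    unfolding wq by (simp add: field_simps)
  have dw: "(w has_field_derivative (deriv ^^ 4) u t - 1/4 + 12 * deriv u t * (deriv ^^ 2) u t) (at t)"
    unfolding w_def by (rule has_field_derivative_w_coordinate[OF d1 d3])
  have dq: "(q has_field_derivative - (1/2) * (q t)^2 - 4 * y t) (at t)"
    unfolding q_def y_def
    by (rule has_field_derivative_q_coordinate[OF d1 d2 d3 d4 w_nz[rule_format, OF t] ode[rule_format, OF t]])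
  show "(x has_field_derivative y t) (at t) \<and> (y has_field_derivative z t) (at t) \<and>
        (z has_field_derivative (- 6 * (y t)^2 + w t + t / 4)) (at t) \<and>
        (w has_field_derivative (w t * q t + (2 * \<alpha>2 - 1) / 4)) (at t) \<and>
        (q has_field_derivative (- (1/2) * (q t)^2 - 4 * y t)) (at t)"
    unfolding z' w' using d0 d1 d2 dw dq by (simp add: x_def y_def z_def)
qed

end
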